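(* Let $A$ be a finite-dimensional complex evolution algebra which is not a non-zero trivial evolution algebra, with natural basis $B=\{e_1,\dots,e_n\}$ and structure matrix $W=(\omega_{ij})_{i,j=1}^n$ (so $e_j^2=\sum_i\omega_{ij}e_i$). Let $a=\sum_{i=1}^n\alpha_ie_i$, $D_a=\mathrm{diag}(\alpha_1,\dots,\alpha_n)$ and $\lambda\in\mathbb{C}$. Then: (i) $\lambda\in\sigma_m^A(a)$ if and only if $\lambda=0$ or $\lambda$ is an eigenvalue of the matrix $WD_a$; (ii) $\lambda\in\sigma^A(a)$ if and only if $\lambda=0$ or the linear system $(WD_a-\lambda I_n)\beta=(\alpha_1,\dots,\alpha_n)^T$ has no solution $\beta\in\mathbb{C}^n$ (in which case $\lambda\in\sigma^A_m(a)$).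
   Context: An evolution algebra is an algebra with a basis $\{e_i\}$ (natural basis) with $e_ie_j=0$ for $i\neq j$; a non-zero trivial evolution algebra has a natural basis with $e_i^2=\omega_{ii}e_i$, $\omega_{ii}\neq0$ for all $i$. For a complex algebra $A$: if $A$ has a unit $e$ put $\tilde A=A$, else $\tilde A=A\oplus\mathbb{C}\mathbf1$ is the unitization with product $(a+\lambda\mathbf1)(b+\mu\mathbf1)=ab+\lambda b+\mu a+\lambda\mu\mathbf1$ and $e=\mathbf1$. $x\in\tilde A$ is invertible if it has a left and a right inverse, and m-invertible if $L_x(y)=xy$ and $R_x(y)=yx$ are bijective on $\tilde A$. $\sigma^A(a)=\{\lambda:a-\lambda e\text{ not invertible in }\tilde A\}$ and $\sigma^A_m(a)=\{\lambda:a-\lambda e\text{ not m-invertible in }\tilde A\}$. *)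

theory Defs
  imports "HOL-Analysis.Analysis"
begin

text \<open>A finite-dimensional complex evolution algebra with natural basis
  e_i (i ranging over the finite type 'n), written in coordinates w.r.t. this
  natural basis. The structure matrix W has entries W$i$j = omega_ij, so that
  e_j e_j = sum_i omega_ij e_i and e_j e_k = 0 for j \<noteq> k.\<close>

definition evo_mult :: "complex^'n^'n \<Rightarrow> complex^'n \<Rightarrow> complex^'n \<Rightarrow> complex^'n" where
  "evo_mult W x y = (\<chi> i. \<Sum>j\<in>UNIV. W$i$j * x$j * y$j)"

definition is_basis_C :: "('n::finite \<Rightarrow> complex^'n) \<Rightarrow> bool" where
  "is_basis_C f \<longleftrightarrow>
     (\<forall>c. (\<Sum>i\<in>UNIV. c i *s f i) = 0 \<longrightarrow> (\<forall>i. c i = 0)) \<and>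
     (\<forall>x. \<exists>c. x = (\<Sum>i\<in>UNIV. c i *s f i))"

definition natural_basis :: "complex^'n^'n \<Rightarrow> ('n::finite \<Rightarrow> complex^'n) \<Rightarrow> bool" where
  "natural_basis W f \<longleftrightarrow> is_basis_C f \<and>
     (\<forall>i j. i \<noteq> j \<longrightarrow> evo_mult W (f i) (f j) = 0)"

text \<open>Non-zero trivial evolution algebra: some natural basis with
  f_i^2 = w_i f_i, w_i \<noteq> 0 for all i (the algebra is non-zero since 'n is nonempty).\<close>
definition nonzero_trivial_evo :: "complex^'n^'n \<Rightarrow> bool" where
  "nonzero_trivial_evo W \<longleftrightarrow> (\<exists>f::'n::finite \<Rightarrow> complex^'n. natural_basis W f \<and>
     (\<forall>i. \<exists>w. w \<noteq> 0 \<and> evo_mult W (f i) (f i) = w *s f i))"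

definition evo_has_unit :: "complex^'n^'n \<Rightarrow> bool" where
  "evo_has_unit W \<longleftrightarrow> (\<exists>e. \<forall>x. evo_mult W e x = x \<and> evo_mult W x e = x)"

definition evo_unit :: "complex^'n^'n \<Rightarrow> complex^'n" where
  "evo_unit W = (SOME e. \<forall>x. evo_mult W e x = x \<and> evo_mult W x e = x)"

text \<open>Unitization A \<oplus> C 1 with (a + l1)(b + m1) = ab + l b + m a + l m 1.\<close>
definition unitz_mult :: "complex^'n^'n \<Rightarrow> ((complex^'n) \<times> complex) \<Rightarrow> ((complex^'n) \<times> complex)
    \<Rightarrow> ((complex^'n) \<times> complex)" where
  "unitz_mult W p q = (evo_mult W (fst p) (fst q) + snd p *s fst q + snd q *s fst p,
                       snd p * snd q)"

definition invertible_in :: "('a \<Rightarrow> 'a \<Rightarrow> 'a) \<Rightarrow> 'a \<Rightarrow> 'a \<Rightarrow> bool" where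
  "invertible_in m e x \<longleftrightarrow> (\<exists>y. m x y = e) \<and> (\<exists>z. m z x = e)"

definition m_invertible_in :: "('a \<Rightarrow> 'a \<Rightarrow> 'a) \<Rightarrow> 'a \<Rightarrow> bool" where
  "m_invertible_in m x \<longleftrightarrow> bij (m x) \<and> bij (\<lambda>y. m y x)"

text \<open>sigma^A(a) and sigma^A_m(a): in A itself if A has a unit, otherwise in the
  unitization, where a - l e = (a, -l).\<close>
definition evo_spectrum :: "complex^'n^'n \<Rightarrow> complex^'n \<Rightarrow> complex set" where
  "evo_spectrum W a = (if evo_has_unit W
     then {l. \<not> invertible_in (evo_mult W) (evo_unit W) (a - l *s evo_unit W)}
     else {l. \<not> invertible_in (unitz_mult W) (0, 1) (a, - l)})"

definition evo_m_spectrum :: "complex^'n^'n \<Rightarrow> complex^'n \<Rightarrow> complex set" where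
  "evo_m_spectrum W a = (if evo_has_unit W
     then {l. \<not> m_invertible_in (evo_mult W) (a - l *s evo_unit W)}
     else {l. \<not> m_invertible_in (unitz_mult W) (a, - l)})"

definition diag_mat :: "'a::zero^'n \<Rightarrow> 'a^'n^'n" where
  "diag_mat a = (\<chi> i j. if i = j then a$i else 0)"

definition is_eigenvalue :: "complex^'n^'n \<Rightarrow> complex \<Rightarrow> bool" where
  "is_eigenvalue M l \<longleftrightarrow> (\<exists>v. v \<noteq> 0 \<and> M *v v = l *s v)"

end

theory Submission
  imports Defs
begin

text \<open>A unit e forces W$i$j * e$j = \<delta>_ij, so the standard basis is a natural basis on which
  W acts as an invertible diagonal matrix: a unital evolution algebra is non-zero trivial.
  Hence A has no unit and everything happens in the unitization, where multiplication by
  (a, -l) on either side (the algebra is commutative) is the linear map with block matrix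
  ((W D_a - l I, a), (0, -l)). Such a map is bijective iff -l \<noteq> 0 and W D_a - l I is
  injective, and it hits the unit (0, 1) iff -l \<noteq> 0 and a lies in the range of W D_a - l I.\<close>

lemma evo_mult_eq_matrix_vector_mult: "evo_mult W a b = (W ** diag_mat a) *v b"
  by (simp add: vec_eq_iff evo_mult_def matrix_matrix_mult_def matrix_vector_mult_def diag_mat_def
      if_distrib[of "\<lambda>x. _ * x"] sum.delta cong: if_cong)

lemma evo_mult_commute: "evo_mult W a b = evo_mult W b a"
  by (simp add: evo_mult_def mult_ac)

lemma unitz_mult_commute: "unitz_mult W p q = unitz_mult W q p"
  by (simp add: unitz_mult_def evo_mult_commute[of W "fst p"] add_ac mult_ac)

lemma mat_matrix_vector_mult: "mat c *v x = c *s (x :: 'a::comm_semiring_1^'n)"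
  by (simp add: vec_eq_iff matrix_vector_mult_def mat_def
      if_distrib[of "\<lambda>x. x * _"] sum.delta cong: if_cong)

lemma is_basis_C_axis: "is_basis_C (\<lambda>i::'n::finite. axis i (1::complex))"
  unfolding is_basis_C_def
proof (intro conjI allI impI)
  fix c :: "'n \<Rightarrow> complex" and k
  assume "(\<Sum>i\<in>UNIV. c i *s axis i 1) = 0"
  then have "(\<Sum>i\<in>UNIV. c i *s axis i 1) $ k = 0" by simp
  then show "c k = 0"
    by (simp add: sum_component axis_def if_distrib cong: if_cong)
next
  fix x :: "complex^'n"
  show "\<exists>c. x = (\<Sum>i\<in>UNIV. c i *s axis i 1)"
    using basis_expansion[of x, symmetric] by blast
qed

lemma natural_basis_axis: "natural_basis W (\<lambda>i. axis i 1)"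
  unfolding natural_basis_def
  by (intro conjI is_basis_C_axis allI impI)
    (auto simp: vec_eq_iff evo_mult_def axis_def intro!: sum.neutral)

lemma left_unit_structure_matrix:
  assumes "\<And>x. evo_mult W e x = x"
  shows "W$i$j * e$j = (if i = j then 1 else 0)"
proof -
  have "evo_mult W e (axis j 1) $ i = axis j 1 $ i" by (simp add: assms)
  then show ?thesis
    by (simp add: evo_mult_def axis_def if_distrib[of "\<lambda>x. _ * x"] sum.delta cong: if_cong)
qed

lemma nonzero_trivial_evo_if_has_unit:
  assumes "evo_has_unit W"
  shows "nonzero_trivial_evo W"
proof -
  obtain e where e: "\<And>x. evo_mult W e x = x" using assms unfolding evo_has_unit_def by blast
  have diag_nonzero: "W$i$i \<noteq> 0" for i
    using left_unit_structure_matrix[OF e, of i i] by auto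
  have off_diag: "W$i$j = 0" if "i \<noteq> j" for i j
    using left_unit_structure_matrix[OF e, of i j] left_unit_structure_matrix[OF e, of j j] that
    by auto
  have "evo_mult W (axis i 1) (axis i 1) = W$i$i *s axis i 1" for i
    by (auto simp: vec_eq_iff evo_mult_def axis_def off_diag
        if_distrib[of "\<lambda>x. _ * x"] sum.delta cong: if_cong)
  then show ?thesis
    unfolding nonzero_trivial_evo_def using natural_basis_axis diag_nonzero by blast
qed

definition block_triangular_map :: "'a::field^'n^'n \<Rightarrow> 'a^'n \<Rightarrow> 'a \<Rightarrow> ('a^'n) \<times> 'a \<Rightarrow> ('a^'n) \<times> 'a"
  where "block_triangular_map A b c p = (A *v fst p + snd p *s b, c * snd p)"

lemma inj_matrix_vector_mult_iff_surj:
  fixes A :: "'a::field^'n^'n"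
  shows "inj ((*v) A) \<longleftrightarrow> surj ((*v) A)"
  by (metis matrix_left_invertible_injective matrix_right_invertible_surjective
      matrix_left_right_inverse)

lemma bij_block_triangular_map_iff:
  fixes A :: "'a::field^'n^'n"
  shows "bij (block_triangular_map A b c) \<longleftrightarrow> c \<noteq> 0 \<and> inj ((*v) A)"
proof (intro iffI conjI)
  assume bij: "bij (block_triangular_map A b c)"
  show "c \<noteq> 0"
  proof
    assume "c = 0"
    then have "(0, 1) \<notin> range (block_triangular_map A b c)"
      by (auto simp: block_triangular_map_def)
    with bij show False by (simp add: bij_is_surj)
  qed
  show "inj ((*v) A)"
  proof (rule injI)
    fix x y assume "A *v x = A *v y"
    then have "block_triangular_map A b c (x, 0) = block_triangular_map A b c (y, 0)"
      by (simp add: block_triangular_map_def)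
    with bij show "x = y" by (metis bij_is_inj injD prod.inject)
  qed
next
  assume "c \<noteq> 0 \<and> inj ((*v) A)"
  then have c: "c \<noteq> 0" and inj: "inj ((*v) A)" by auto
  have "inj (block_triangular_map A b c)"
  proof (rule injI)
    fix p q assume eq: "block_triangular_map A b c p = block_triangular_map A b c q"
    then have "snd p = snd q" using c by (simp add: block_triangular_map_def)
    with eq have "A *v fst p = A *v fst q" by (simp add: block_triangular_map_def)
    with inj have "fst p = fst q" by (simp add: inj_def)
    with \<open>snd p = snd q\<close> show "p = q" by (simp add: prod_eq_iff)
  qed
  moreover have "y \<in> range (block_triangular_map A b c)" for y
  proof -
    define m where "m = snd y / c"
    have "surj ((*v) A)" using inj inj_matrix_vector_mult_iff_surj by blast
    then obtain x where "A *v x = fst y - m *s b" by (metis surjD)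
    then have "block_triangular_map A b c (x, m) = y"
      using c by (simp add: block_triangular_map_def m_def prod_eq_iff)
    then show ?thesis by (metis rangeI)
  qed
  ultimately show "bij (block_triangular_map A b c)" by (auto simp: bij_def)
qed

lemma block_triangular_map_hits_unit_iff:
  fixes A :: "'a::field^'n^'n"
  shows "(0, 1) \<in> range (block_triangular_map A b c) \<longleftrightarrow> c \<noteq> 0 \<and> (\<exists>\<beta>. A *v \<beta> = b)"
proof
  assume "(0, 1) \<in> range (block_triangular_map A b c)"
  then obtain x m where x: "A *v x + m *s b = 0" and m: "c * m = 1"
    by (auto simp: block_triangular_map_def)
  have "A *v ((- c) *s x) = (- c) *s (A *v x)" by (rule vector_scalar_commute)
  also have "\<dots> = (c * m) *s b"
    using x by (simp add: eq_neg_iff_add_eq_0[symmetric] vec_eq_iff)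
  finally have "A *v ((- c) *s x) = (c * m) *s b" .
  with m show "c \<noteq> 0 \<and> (\<exists>\<beta>. A *v \<beta> = b)" by auto
next
  assume "c \<noteq> 0 \<and> (\<exists>\<beta>. A *v \<beta> = b)"
  then obtain \<beta> where c: "c \<noteq> 0" and \<beta>: "A *v \<beta> = b" by blast
  have "A *v ((- inverse c) *s \<beta>) = (- inverse c) *s b"
    using \<beta> by (metis vector_scalar_commute)
  then have "block_triangular_map A b c ((- inverse c) *s \<beta>, inverse c) = (0, 1)"
    using c by (simp add: block_triangular_map_def)
  then show "(0, 1) \<in> range (block_triangular_map A b c)" by (metis rangeI)
qed

lemma unitz_mult_eq_block_triangular_map:
  "unitz_mult W (a, - l) = block_triangular_map (W ** diag_mat a - mat l) a (- l)"
  by (simp add: fun_eq_iff unitz_mult_def block_triangular_map_def evo_mult_eq_matrix_vector_mult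
      matrix_vector_mult_diff_rdistrib mat_matrix_vector_mult)

lemma evo_m_spectrum_no_unit:
  assumes "\<not> evo_has_unit W"
  shows "l \<in> evo_m_spectrum W a \<longleftrightarrow> \<not> bij (unitz_mult W (a, - l))"
  using assms unitz_mult_commute[of W _ "(a, - l)"]
  by (simp add: evo_m_spectrum_def m_invertible_in_def)

lemma evo_spectrum_no_unit:
  assumes "\<not> evo_has_unit W"
  shows "l \<in> evo_spectrum W a \<longleftrightarrow> (0, 1) \<notin> range (unitz_mult W (a, - l))"
proof -
  have "l \<in> evo_spectrum W a \<longleftrightarrow>
      \<not> ((\<exists>y. unitz_mult W (a, - l) y = (0, 1)) \<and> (\<exists>z. unitz_mult W z (a, - l) = (0, 1)))"
    using assms by (simp add: evo_spectrum_def invertible_in_def)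
  also have "\<dots> \<longleftrightarrow> \<not> (\<exists>y. unitz_mult W (a, - l) y = (0, 1))"
    by (metis unitz_mult_commute)
  finally show ?thesis by (metis rangeE rangeI)
qed

lemma is_eigenvalue_iff_not_inj:
  "is_eigenvalue M l \<longleftrightarrow> \<not> inj ((*v) (M - mat l))"
  by (auto simp: is_eigenvalue_def vec.inj_iff_eq_0 matrix_vector_mult_diff_rdistrib
      mat_matrix_vector_mult)

theorem proposition5p3:
  fixes W :: "complex^'n^'n" and a :: "complex^'n" and l :: complex
  assumes "\<not> nonzero_trivial_evo W"
  shows "(l \<in> evo_m_spectrum W a \<longleftrightarrow> l = 0 \<or> is_eigenvalue (W ** diag_mat a) l)
       \<and> (l \<in> evo_spectrum W a \<longleftrightarrow>
            l = 0 \<or> \<not> (\<exists>\<beta>. (W ** diag_mat a - mat l) *v \<beta> = a))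
       \<and> (\<not> (\<exists>\<beta>. (W ** diag_mat a - mat l) *v \<beta> = a) \<longrightarrow> l \<in> evo_m_spectrum W a)"
proof -
  let ?A = "W ** diag_mat a - mat l"
  have no_unit: "\<not> evo_has_unit W"
    using assms nonzero_trivial_evo_if_has_unit by blast
  have m_spectrum: "l \<in> evo_m_spectrum W a \<longleftrightarrow> l = 0 \<or> \<not> inj ((*v) ?A)"
    using evo_m_spectrum_no_unit[OF no_unit]
    by (simp add: unitz_mult_eq_block_triangular_map bij_block_triangular_map_iff)
  have spectrum: "l \<in> evo_spectrum W a \<longleftrightarrow> l = 0 \<or> \<not> (\<exists>\<beta>. ?A *v \<beta> = a)"
    using evo_spectrum_no_unit[OF no_unit]
    by (simp add: unitz_mult_eq_block_triangular_map block_triangular_map_hits_unit_iff)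
  have "\<not> (\<exists>\<beta>. ?A *v \<beta> = a) \<Longrightarrow> \<not> inj ((*v) ?A)"
    using inj_matrix_vector_mult_iff_surj by (metis surjD)
  then show ?thesis
    using m_spectrum spectrum is_eigenvalue_iff_not_inj by blast
qed

end
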